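(* Let $\tau:\mathcal A\to\mathcal A^+$ be a substitution satisfying the standing assumptions below, with a generating fixed point $u=u_0u_1u_2\ldots$. For a letter $a\in\mathcal A$, the sequence $au=au_0u_1u_2\ldots$ belongs to $X_\tau$ if and only if $a$ is part of a suffix cycle $a_1,a_2,\ldots,a_m$ such that $a_iu_0\in\mathcal L_\tau$ for some $i\in\{1,\ldots,m\}$.
   Context: $\mathcal A$ is a finite alphabet, $\mathcal A^+$ the finite words over it. A substitution $\tau$ is extended to words and one-sided sequences by concatenation. The language $\mathcal L_\tau$ is the set of all finite subwords of the words $\tau^n(a)$, $n\ge1$, $a\in\mathcal A$. A fixed point is $u\in\mathcal A^{\mathbb N}$ with $\tau(u)=u$; it is generating if its set of finite subwords is $\mathcal L_\tau$. $\sigma$ is the left shift and $X_\tau$ is the closure of $\{\sigma^n(u):n\ge0\}$ in $\mathcal A^{\mathbb N}$. Letters $a_1,\ldots,a_m$ form a suffix cycle if the last letter of $\tau(a_i)$ is $a_{i+1}$ for $1\le i<m$ and the last letter of $\tau(a_m)$ is $a_1$; $a$ is part of it if $a\in\{a_1,\ldots,a_m\}$. Standing assumptions: $\tau$ is primitive, $X_\tau$ is aperiodic (infinite), $\tau$ is unilaterally recognizable (with $E=\{0\}\cup\{|\tau(u_0\cdots u_{p-1})|:p>0\}$ there is $L$ such that $u_{[i,i+L-1]}=u_{[j,j+L-1]}$ and $i\in E$ imply $j\in E$), and every power $\tau^n$ is injective on letters. *)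

theory Defs
  imports Main "HOL-Library.Sublist"
begin

text \<open>A substitution is a map tau :: 'a => 'a list (images nonempty, imposed as hypothesis);
  the alphabet is the finite type 'a.  One-sided sequences are functions nat => 'a.\<close>

definition subst_word :: "('a \<Rightarrow> 'a list) \<Rightarrow> 'a list \<Rightarrow> 'a list" where
  "subst_word \<tau> w = concat (map \<tau> w)"

definition subst_pow :: "('a \<Rightarrow> 'a list) \<Rightarrow> nat \<Rightarrow> 'a \<Rightarrow> 'a list" where
  "subst_pow \<tau> n a = (subst_word \<tau> ^^ n) [a]"

text \<open>Extension of tau to one-sided sequences by concatenation (valid for nonempty images:
  the n-th letter of tau(x) is determined by tau(x_0 ... x_n)).\<close>
definition subst_seq :: "('a \<Rightarrow> 'a list) \<Rightarrow> (nat \<Rightarrow> 'a) \<Rightarrow> (nat \<Rightarrow> 'a)" where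
  "subst_seq \<tau> x n = subst_word \<tau> (map x [0..<Suc n]) ! n"

definition lang :: "('a \<Rightarrow> 'a list) \<Rightarrow> 'a list set" where
  "lang \<tau> = {w. \<exists>n\<ge>1. \<exists>a. sublist w (subst_pow \<tau> n a)}"

definition seq_factors :: "(nat \<Rightarrow> 'a) \<Rightarrow> 'a list set" where
  "seq_factors x = {map x [i..<i+k] | i k. True}"

definition fixed_point :: "('a \<Rightarrow> 'a list) \<Rightarrow> (nat \<Rightarrow> 'a) \<Rightarrow> bool" where
  "fixed_point \<tau> u \<longleftrightarrow> subst_seq \<tau> u = u"

definition generating_fixed_point :: "('a \<Rightarrow> 'a list) \<Rightarrow> (nat \<Rightarrow> 'a) \<Rightarrow> bool" where
  "generating_fixed_point \<tau> u \<longleftrightarrow> fixed_point \<tau> u \<and> seq_factors u = lang \<tau>"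

definition shift :: "(nat \<Rightarrow> 'a) \<Rightarrow> (nat \<Rightarrow> 'a)" where
  "shift x n = x (Suc n)"

text \<open>X_tau: closure of the shift orbit of u in A^N with the product of discrete topologies.
  Unfolded via the cylinder-set basis: x is in the closure iff every cylinder
  [x_0 ... x_(n-1)] contains some shift^k(u).\<close>
definition X_tau :: "(nat \<Rightarrow> 'a) \<Rightarrow> (nat \<Rightarrow> 'a) set" where
  "X_tau u = {x. \<forall>n. \<exists>k. \<forall>i<n. x i = (shift ^^ k) u i}"

definition primitive :: "('a \<Rightarrow> 'a list) \<Rightarrow> bool" where
  "primitive \<tau> \<longleftrightarrow> (\<exists>n\<ge>1. \<forall>a b. b \<in> set (subst_pow \<tau> n a))"

definition cut_set :: "('a \<Rightarrow> 'a list) \<Rightarrow> (nat \<Rightarrow> 'a) \<Rightarrow> nat set" where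
  "cut_set \<tau> u = {0} \<union> {length (subst_word \<tau> (map u [0..<p])) | p. p > 0}"

definition unilaterally_recognizable :: "('a \<Rightarrow> 'a list) \<Rightarrow> (nat \<Rightarrow> 'a) \<Rightarrow> bool" where
  "unilaterally_recognizable \<tau> u \<longleftrightarrow>
     (\<exists>L. \<forall>i j. (\<forall>k<L. u (i + k) = u (j + k)) \<and> i \<in> cut_set \<tau> u \<longrightarrow> j \<in> cut_set \<tau> u)"

definition suffix_cycle :: "('a \<Rightarrow> 'a list) \<Rightarrow> 'a list \<Rightarrow> bool" where
  "suffix_cycle \<tau> cyc \<longleftrightarrow> cyc \<noteq> [] \<and>
     (\<forall>i. Suc i < length cyc \<longrightarrow> last (\<tau> (cyc ! i)) = cyc ! Suc i) \<and>
     last (\<tau> (last cyc)) = hd cyc"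

definition prepend :: "'a \<Rightarrow> (nat \<Rightarrow> 'a) \<Rightarrow> (nat \<Rightarrow> 'a)" where
  "prepend a x n = (case n of 0 \<Rightarrow> a | Suc k \<Rightarrow> x k)"

end

theory Submission
  imports Defs
begin

text \<open>Write \<open>f b\<close> for the last letter of \<open>\<tau> b\<close>, so that suffix cycles are the cycles of \<open>f\<close>.
  If \<open>a u \<in> X\<^sub>\<tau>\<close>, then long prefixes \<open>a u\<^sub>0 \<dots> u\<^sub>M\<close> occur in \<open>u\<close>, and recognizability
  shows that such an occurrence is cut by \<open>\<tau>\<close> exactly like the prefix of \<open>u\<close>; desubstituting gives
  a letter \<open>b\<close> with \<open>f b = a\<close> and again \<open>b u \<in> X\<^sub>\<tau>\<close>. So every letter of the finite set
  \<open>{c. c u \<in> X\<^sub>\<tau>}\<close> has an \<open>f\<close>-preimage in that set, which forces \<open>a\<close> to be \<open>f\<close>-periodic,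
  and \<open>a u\<^sub>0\<close> is a factor of \<open>u\<close>.
  Conversely, if \<open>c u\<^sub>0 \<in> L\<^sub>\<tau>\<close> with \<open>c\<close> on the cycle of \<open>a\<close>, then \<open>\<tau>\<^sup>n(c) \<tau>\<^sup>n(u\<^sub>0)\<close> is a
  factor of \<open>u\<close>; for suitable arbitrarily large \<open>n\<close> the word \<open>\<tau>\<^sup>n(c)\<close> ends with \<open>a\<close>, while
  \<open>\<tau>\<^sup>n(u\<^sub>0)\<close> is a prefix of \<open>u\<close> of length greater than \<open>n\<close> (primitivity and aperiodicity
  make \<open>\<tau>(u\<^sub>0)\<close> longer than one letter).\<close>

section \<open>Substitutions on words\<close>

definition suffix_letter :: "('a \<Rightarrow> 'a list) \<Rightarrow> 'a \<Rightarrow> 'a" where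
  "suffix_letter \<tau> b = last (\<tau> b)"

lemma subst_word_Nil [simp]: "subst_word \<tau> [] = []"
  by (simp add: subst_word_def)

lemma subst_word_Cons [simp]: "subst_word \<tau> (b # w) = \<tau> b @ subst_word \<tau> w"
  by (simp add: subst_word_def)

lemma subst_word_append [simp]: "subst_word \<tau> (v @ w) = subst_word \<tau> v @ subst_word \<tau> w"
  by (simp add: subst_word_def)

lemma funpow_subst_word_append:
  "(subst_word \<tau> ^^ n) (v @ w) = (subst_word \<tau> ^^ n) v @ (subst_word \<tau> ^^ n) w"
  by (induction n) auto

lemma length_subst_word_ge:
  assumes "\<forall>b. \<tau> b \<noteq> []"
  shows "length w \<le> length (subst_word \<tau> w)"
proof (induction w)
  case (Cons b w)
  have "0 < length (\<tau> b)" using assms by simp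
  with Cons.IH show ?case by (simp only: subst_word_Cons length_append length_Cons)
qed simp

lemma length_funpow_subst_word_ge:
  assumes "\<forall>b. \<tau> b \<noteq> []"
  shows "length w \<le> length ((subst_word \<tau> ^^ n) w)"
  by (induction n) (auto intro: le_trans length_subst_word_ge[OF assms])

lemma last_subst_word:
  assumes "\<forall>b. \<tau> b \<noteq> []" and "w \<noteq> []"
  shows "last (subst_word \<tau> w) = suffix_letter \<tau> (last w)"
proof -
  have "subst_word \<tau> w = subst_word \<tau> (butlast w) @ \<tau> (last w)"
    using subst_word_append[of \<tau> "butlast w" "[last w]"] \<open>w \<noteq> []\<close> by simp
  then show ?thesis using assms(1) by (simp add: suffix_letter_def)
qed

lemma last_funpow_subst_word:
  assumes ne: "\<forall>b. \<tau> b \<noteq> []"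
  shows "last ((subst_word \<tau> ^^ n) [c]) = (suffix_letter \<tau> ^^ n) c"
proof (induction n)
  case 0 then show ?case by simp
next
  case (Suc n)
  have "(subst_word \<tau> ^^ n) [c] \<noteq> []"
    using length_funpow_subst_word_ge[OF ne, of "[c]" n] by auto
  then show ?case using Suc last_subst_word[OF ne] by simp
qed

section \<open>Factors and the orbit closure\<close>

lemma seq_factors_sublist:
  assumes "w \<in> seq_factors x" and "sublist v w"
  shows "v \<in> seq_factors x"
proof -
  obtain i k where w: "w = map x [i..<i + k]"
    using assms(1) unfolding seq_factors_def by blast
  obtain p s where ps: "w = p @ v @ s"
    using assms(2) unfolding sublist_def by blast
  have len: "length p + length v + length s = k"
    using arg_cong[OF ps, of length] w by simp
  have "v = take (length v) (drop (length p) w)"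
    using ps by simp
  also have "\<dots> = map x [i + length p..<i + length p + length v]"
    using w len by (simp add: take_map drop_map)
  finally show ?thesis unfolding seq_factors_def by blast
qed

lemma mem_seq_factors_iff: "w \<in> seq_factors x \<longleftrightarrow> (\<exists>i. w = map x [i..<i + length w])"
proof
  assume "w \<in> seq_factors x"
  then obtain i k where "w = map x [i..<i + k]"
    unfolding seq_factors_def by blast
  then show "\<exists>i. w = map x [i..<i + length w]" by auto
qed (auto simp: seq_factors_def)

lemma map_upt_eq_iff: "map x [0..<n] = map u [k..<k + n] \<longleftrightarrow> (\<forall>t<n. u (k + t) = x t)"
  by (auto simp: list_eq_iff_nth_eq)

lemma mem_X_tau_iff: "x \<in> X_tau u \<longleftrightarrow> (\<forall>n. map x [0..<n] \<in> seq_factors u)"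
proof -
  have shift: "(shift ^^ k) u i = u (k + i)" for k i
    by (induction k arbitrary: i) (auto simp: shift_def)
  show ?thesis
    unfolding X_tau_def shift mem_seq_factors_iff[of "map x _"] by (simp add: map_upt_eq_iff) metis
qed

lemma Cons_prefix_mem_seq_factors_iff:
  "c # map u [0..<n] \<in> seq_factors u \<longleftrightarrow> (\<exists>k. u k = c \<and> (\<forall>t<n. u (Suc k + t) = u t))"
proof -
  have "map u [k..<k + Suc n] = u k # map u [Suc k..<Suc k + n]" for k
    by (simp add: upt_conv_Cons del: upt_Suc)
  then have "c # map u [0..<n] = map u [k..<k + Suc n] \<longleftrightarrow> u k = c \<and> (\<forall>t<n. u (Suc k + t) = u t)" for k
    unfolding map_upt_eq_iff[symmetric] by auto
  then show ?thesis
    unfolding mem_seq_factors_iff[of "c # _"] by simp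
qed

lemma prepend_mem_X_tau_iff:
  "prepend c u \<in> X_tau u \<longleftrightarrow> (\<forall>n. c # map u [0..<n] \<in> seq_factors u)"
proof -
  have prefix: "map (prepend c u) [0..<Suc n] = c # map u [0..<n]" for n
    by (simp add: map_upt_Suc prepend_def del: upt_Suc)
  show ?thesis
    unfolding mem_X_tau_iff
  proof (intro iffI allI)
    fix n assume "\<forall>n. map (prepend c u) [0..<n] \<in> seq_factors u"
    then show "c # map u [0..<n] \<in> seq_factors u"
      unfolding prefix[symmetric] by blast
  next
    fix n assume all: "\<forall>n. c # map u [0..<n] \<in> seq_factors u"
    show "map (prepend c u) [0..<n] \<in> seq_factors u"
    proof (cases n)
      case 0 then show ?thesis by (simp add: mem_seq_factors_iff)
    next
      case (Suc m) then show ?thesis using all unfolding Suc prefix by blast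
    qed
  qed
qed

lemma Cons_prefix_mem_seq_factors_antimono:
  assumes "S \<le> T" and "b # map u [0..<T] \<in> seq_factors u"
  shows "b # map u [0..<S] \<in> seq_factors u"
proof -
  have "b # map u [0..<T] = (b # map u [0..<S]) @ map u [S..<T]"
    using upt_add_eq_append[of 0 S "T - S"] assms(1) by simp
  then show ?thesis
    using seq_factors_sublist[OF assms(2)] by simp
qed

section \<open>The fixed point and its cutting positions\<close>

text \<open>\<open>cut_pos \<tau> u p = |\<tau>(u\<^sub>0 \<dots> u\<^sub>p\<^sub>-\<^sub>1)|\<close>: at a fixed point, \<open>u\<close> is the concatenation of the
  blocks \<open>\<tau>(u\<^sub>p)\<close> starting at these positions, whose set is \<open>cut_set \<tau> u\<close>.\<close>

definition cut_pos :: "('a \<Rightarrow> 'a list) \<Rightarrow> (nat \<Rightarrow> 'a) \<Rightarrow> nat \<Rightarrow> nat" where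
  "cut_pos \<tau> u p = length (subst_word \<tau> (map u [0..<p]))"

lemma cut_pos_0 [simp]: "cut_pos \<tau> u 0 = 0"
  by (simp add: cut_pos_def)

lemma cut_pos_Suc: "cut_pos \<tau> u (Suc p) = cut_pos \<tau> u p + length (\<tau> (u p))"
  by (simp add: cut_pos_def)

lemma strict_mono_cut_pos:
  assumes "\<forall>b. \<tau> b \<noteq> []"
  shows "strict_mono (cut_pos \<tau> u)"
  unfolding strict_mono_Suc_iff using assms by (simp add: cut_pos_Suc)

lemma cut_set_eq_range: "cut_set \<tau> u = range (cut_pos \<tau> u)"
proof (intro equalityI subsetI)
  fix x assume "x \<in> cut_set \<tau> u"
  then consider "x = 0" | p where "x = cut_pos \<tau> u p"
    unfolding cut_set_def cut_pos_def[symmetric] by blast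
  then show "x \<in> range (cut_pos \<tau> u)"
    by cases (use rangeI[of "cut_pos \<tau> u" 0] in simp_all)
next
  fix x assume "x \<in> range (cut_pos \<tau> u)"
  then obtain p where "x = cut_pos \<tau> u p" by blast
  then show "x \<in> cut_set \<tau> u"
    unfolding cut_set_def cut_pos_def[symmetric] by (cases p) auto
qed

lemma fixed_point_subst_word_prefix:
  assumes fp: "fixed_point \<tau> u" and ne: "\<forall>b. \<tau> b \<noteq> []"
  shows "subst_word \<tau> (map u [0..<p]) = map u [0..<cut_pos \<tau> u p]"
proof (rule nth_equalityI)
  show "length (subst_word \<tau> (map u [0..<p])) = length (map u [0..<cut_pos \<tau> u p])"
    by (simp add: cut_pos_def)
next
  let ?w = "\<lambda>q. subst_word \<tau> (map u [0..<q])"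
  fix i assume i: "i < length (?w p)"
  have nth_w: "?w q ! i = u i" if "i < length (?w q)" for q
  proof -
    have prefix: "take (length (?w q)) (?w r) = ?w q" if "q \<le> r" for q r
      using upt_add_eq_append[of 0 q "r - q"] that by simp
    have ui: "?w (Suc i) ! i = u i"
      using fun_cong[OF fp[unfolded fixed_point_def], of i] by (simp add: subst_seq_def)
    have "i < length (?w (Suc i))"
      using length_subst_word_ge[OF ne, of "map u [0..<Suc i]"] by simp
    show ?thesis
    proof (cases "q \<le> Suc i")
      case True
      then have "?w q ! i = take (length (?w q)) (?w (Suc i)) ! i"
        by (simp only: prefix)
      also have "\<dots> = ?w (Suc i) ! i"
        using that by (rule nth_take)
      finally show ?thesis
        unfolding ui .
    next
      case False
      have "?w q ! i = take (length (?w (Suc i))) (?w q) ! i"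
        using \<open>i < length (?w (Suc i))\<close> by (rule nth_take[symmetric])
      also have "\<dots> = ?w (Suc i) ! i"
        using False by (simp only: prefix not_le Suc_leI)
      finally show ?thesis
        unfolding ui .
    qed
  qed
  show "?w p ! i = map u [0..<cut_pos \<tau> u p] ! i"
    using nth_w[OF i] i by (simp add: cut_pos_def)
qed

lemma fixed_point_subst_letter:
  assumes fp: "fixed_point \<tau> u" and ne: "\<forall>b. \<tau> b \<noteq> []"
  shows "\<tau> (u s) = map u [cut_pos \<tau> u s..<cut_pos \<tau> u (Suc s)]"
proof -
  have "map u [0..<cut_pos \<tau> u (Suc s)] = map u [0..<cut_pos \<tau> u s] @ \<tau> (u s)"
    using fixed_point_subst_word_prefix[OF fp ne, of "Suc s"]
      fixed_point_subst_word_prefix[OF fp ne, of s] by simp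
  then have "\<tau> (u s) = drop (cut_pos \<tau> u s) (map u [0..<cut_pos \<tau> u (Suc s)])"
    by simp
  then show ?thesis
    by (simp add: drop_map)
qed

lemma subst_word_mem_seq_factors:
  assumes fp: "fixed_point \<tau> u" and ne: "\<forall>b. \<tau> b \<noteq> []"
    and "w \<in> seq_factors u"
  shows "subst_word \<tau> w \<in> seq_factors u"
proof -
  obtain i where w: "w = map u [i..<i + length w]"
    using assms(3) unfolding mem_seq_factors_iff by blast
  let ?a = "cut_pos \<tau> u i" and ?b = "cut_pos \<tau> u (i + length w)"
  have "map u [0..<i + length w] = map u [0..<i] @ w"
    using w upt_add_eq_append[of 0 i "length w"] by simp
  then have "map u [0..<?b] = map u [0..<?a] @ subst_word \<tau> w"
    using fixed_point_subst_word_prefix[OF fp ne, of "i + length w"]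
      fixed_point_subst_word_prefix[OF fp ne, of i] by simp
  then have "subst_word \<tau> w = drop ?a (map u [0..<?b])"
    by simp
  moreover have "?a \<le> ?b"
    using strict_mono_less_eq[OF strict_mono_cut_pos[OF ne]] by simp
  ultimately have "subst_word \<tau> w = map u [?a..<?a + length (subst_word \<tau> w)]"
    by (simp add: drop_map)
  then show ?thesis
    unfolding mem_seq_factors_iff by blast
qed

lemma funpow_subst_word_mem_seq_factors:
  assumes "fixed_point \<tau> u" and "\<forall>b. \<tau> b \<noteq> []"
    and "w \<in> seq_factors u"
  shows "(subst_word \<tau> ^^ n) w \<in> seq_factors u"
  by (induction n) (simp_all add: assms subst_word_mem_seq_factors)

lemma hd_subst_first_letter:
  assumes "fixed_point \<tau> u" and "\<forall>b. \<tau> b \<noteq> []"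
  shows "hd (\<tau> (u 0)) = u 0"
proof -
  have "0 < cut_pos \<tau> u (Suc 0)"
    using assms(2) by (simp add: cut_pos_Suc)
  then show ?thesis
    using fixed_point_subst_letter[OF assms, of 0] by (simp add: hd_map)
qed

lemma funpow_subst_word_first_letter:
  assumes "fixed_point \<tau> u" and "\<forall>b. \<tau> b \<noteq> []"
  shows "(subst_word \<tau> ^^ n) [u 0] = map u [0..<(cut_pos \<tau> u ^^ n) 1]"
  by (induction n) (simp_all add: fixed_point_subst_word_prefix[OF assms])

lemma length_subst_first_letter_ge_2:
  assumes fp: "fixed_point \<tau> u" and ne: "\<forall>b. \<tau> b \<noteq> []"
    and prim: "primitive \<tau>" and aper: "infinite (X_tau u)"
  shows "2 \<le> length (\<tau> (u 0))"
proof (rule ccontr)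
  assume "\<not> 2 \<le> length (\<tau> (u 0))"
  then have "\<tau> (u 0) = [u 0]"
    using hd_subst_first_letter[OF fp ne] ne
    by (cases "\<tau> (u 0)") (auto simp: not_le)
  then have "subst_pow \<tau> n (u 0) = [u 0]" for n
    unfolding subst_pow_def by (induction n) simp_all
  moreover obtain n where "\<forall>a b. b \<in> set (subst_pow \<tau> n a)"
    using prim unfolding primitive_def by blast
  ultimately have "b = u 0" for b
    by (metis empty_iff empty_set set_ConsD)
  then have "X_tau u \<subseteq> {\<lambda>_. u 0}"
    by auto
  then show False
    using aper finite_subset by blast
qed

lemma Suc_le_cut_pos:
  assumes "\<forall>b. \<tau> b \<noteq> []" and "2 \<le> length (\<tau> (u 0))" and "0 < p"
  shows "Suc p \<le> cut_pos \<tau> u p"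
  using assms(3)
proof (induction p)
  case (Suc p)
  show ?case
  proof (cases "p = 0")
    case True
    with assms(2) show ?thesis by (simp add: cut_pos_Suc)
  next
    case False
    with Suc.IH have "Suc p \<le> cut_pos \<tau> u p" by simp
    moreover have "0 < length (\<tau> (u p))"
      using assms(1) by simp
    ultimately show ?thesis
      unfolding cut_pos_Suc by linarith
  qed
qed simp

lemma length_funpow_subst_word_first_letter:
  assumes fp: "fixed_point \<tau> u" and ne: "\<forall>b. \<tau> b \<noteq> []"
    and prim: "primitive \<tau>" and aper: "infinite (X_tau u)"
  shows "Suc n \<le> length ((subst_word \<tau> ^^ n) [u 0])"
proof -
  have "Suc n \<le> (cut_pos \<tau> u ^^ n) 1"
    using Suc_le_cut_pos[of \<tau> u, OF ne length_subst_first_letter_ge_2[OF assms]]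
    by (induction n) (auto intro: order_trans)
  then show ?thesis
    unfolding funpow_subst_word_first_letter[OF fp ne] by simp
qed

section \<open>Suffix cycles\<close>

lemma periodic_if_preimages_in_finite:
  assumes "finite P" and pre: "\<forall>c\<in>P. \<exists>b\<in>P. f b = c" and "a \<in> P"
  shows "\<exists>m>0. (f ^^ m) a = a"
proof -
  obtain g where g: "\<forall>c\<in>P. g c \<in> P \<and> f (g c) = c"
    using pre by metis
  define chain where "chain = (\<lambda>n. (g ^^ n) a)"
  have chain_in: "chain n \<in> P" for n
    by (induction n) (simp_all add: chain_def \<open>a \<in> P\<close> g)
  have undo: "(f ^^ s) (chain (s + d)) = chain d" for s d
  proof (induction s)
    case (Suc s)
    have "f (chain (Suc s + d)) = chain (s + d)"
      using g chain_in by (simp add: chain_def)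
    then show ?case
      using Suc by (simp add: funpow_Suc_right del: funpow.simps)
  qed simp
  have "\<not> inj chain"
    using \<open>finite P\<close> chain_in finite_imageD finite_subset infinite_UNIV_nat
    by (metis image_subsetI)
  then obtain s t where "s < t" and "chain s = chain t"
    unfolding inj_def by (metis linorder_neqE_nat)
  then have "chain (t - s) = a"
    using undo[of s 0] undo[of s "t - s"] by (simp add: chain_def)
  then have "(f ^^ (t - s)) a = a"
    using undo[of "t - s" 0] by (simp add: chain_def)
  with \<open>s < t\<close> show ?thesis
    by (intro exI[of _ "t - s"]) simp
qed

lemma suffix_cycle_nth:
  assumes "suffix_cycle \<tau> cyc" and "i < length cyc"
  shows "cyc ! i = (suffix_letter \<tau> ^^ i) (hd cyc)"
  using assms(2)
proof (induction i)
  case 0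
  then show ?case by (simp add: hd_conv_nth)
next
  case (Suc i)
  have "last (\<tau> (cyc ! i)) = cyc ! Suc i"
    using assms(1) Suc.prems unfolding suffix_cycle_def by blast
  with Suc.IH[OF Suc_lessD[OF Suc.prems]] show ?case
    by (simp add: suffix_letter_def)
qed

lemma suffix_cycle_period:
  assumes "suffix_cycle \<tau> cyc"
  shows "(suffix_letter \<tau> ^^ length cyc) (hd cyc) = hd cyc"
proof -
  obtain m where m: "length cyc = Suc m"
    using assms by (cases cyc) (auto simp: suffix_cycle_def)
  then have "cyc ! m = last cyc"
    by (metis diff_Suc_1 last_conv_nth length_0_conv nat.distinct(1))
  moreover have "(suffix_letter \<tau> ^^ length cyc) (hd cyc) = suffix_letter \<tau> (cyc ! m)"
    using suffix_cycle_nth[OF assms, of m] m by simp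
  ultimately show ?thesis
    using assms by (simp add: suffix_cycle_def suffix_letter_def)
qed

lemma suffix_cycle_reaches:
  assumes cyc: "suffix_cycle \<tau> cyc" and "b \<in> set cyc" and "c \<in> set cyc"
  shows "\<exists>n\<ge>N. (suffix_letter \<tau> ^^ n) c = b"
proof -
  let ?f = "suffix_letter \<tau>" and ?m = "length cyc" and ?h = "hd cyc"
  obtain i j where i: "i < ?m" "c = cyc ! i" and j: "j < ?m" "b = cyc ! j"
    using assms(2,3) by (metis in_set_conv_nth)
  have period: "(?f ^^ (k * ?m)) ?h = ?h" for k
    by (induction k) (simp_all add: funpow_add suffix_cycle_period[OF cyc])
  define n where "n = (Suc N * ?m - i) + j"
  have "N * ?m < Suc N * ?m - i"
    using i(1) by simp
  moreover have "N \<le> N * ?m"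
    using i(1) by simp
  ultimately have "N \<le> n"
    unfolding n_def by linarith
  moreover have "n + i = j + Suc N * ?m"
    using i(1) unfolding n_def by (simp add: add_mult_distrib)
  then have "(?f ^^ n) c = (?f ^^ j) ((?f ^^ (Suc N * ?m)) ?h)"
    unfolding i(2) suffix_cycle_nth[OF cyc i(1)] by (metis comp_apply funpow_add)
  then have "(?f ^^ n) c = b"
    unfolding period j(2) suffix_cycle_nth[OF cyc j(1)] .
  ultimately show ?thesis by blast
qed

lemma suffix_cycle_orbit:
  assumes "0 < m" and "(suffix_letter \<tau> ^^ m) a = a"
  shows "suffix_cycle \<tau> (map (\<lambda>i. (suffix_letter \<tau> ^^ i) a) [0..<m])"
proof -
  obtain k where m: "m = Suc k"
    using assms(1) by (metis gr0_implies_Suc)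
  have "last (\<tau> ((suffix_letter \<tau> ^^ k) a)) = a"
    using assms(2) unfolding m by (simp add: suffix_letter_def)
  then show ?thesis
    unfolding suffix_cycle_def using assms(1)
    by (simp add: suffix_letter_def last_map hd_map m del: upt_Suc)
qed

section \<open>Desubstitution by recognizability\<close>

lemma strict_mono_Suc_le_if_less:
  fixes e :: "nat \<Rightarrow> nat"
  assumes "strict_mono e" and "e s < e r"
  shows "e (Suc s) \<le> e r"
  using assms by (simp add: strict_mono_less strict_mono_less_eq Suc_le_eq)

lemma strict_mono_range_translate:
  fixes e :: "nat \<Rightarrow> nat"
  assumes mono: "strict_mono e" and "e 0 = 0" and "e p = j"
    and window: "\<And>t. t + L \<le> M \<Longrightarrow> t \<in> range e \<longleftrightarrow> j + t \<in> range e"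
    and "e s + L \<le> M"
  shows "e (p + s) = j + e s"
  using assms(5)
proof (induction s)
  case 0
  then show ?case using assms(2,3) by simp
next
  case (Suc s)
  have less: "e s < e (Suc s)"
    using mono by (simp add: strict_mono_less)
  with Suc have IH: "e (p + s) = j + e s"
    by simp
  have "j + e (Suc s) \<in> range e"
    using window[OF Suc.prems] by blast
  then obtain r where r: "e r = j + e (Suc s)"
    by (metis rangeE)
  have upper: "e (Suc (p + s)) \<le> j + e (Suc s)"
    using strict_mono_Suc_le_if_less[OF mono, of "p + s" r] r IH less by simp
  define t where "t = e (Suc (p + s)) - j"
  have step: "e (p + s) < e (Suc (p + s))"
    using mono by (simp add: strict_mono_less)
  with IH have jt: "j + t = e (Suc (p + s))"
    unfolding t_def by simp
  have "t + L \<le> M"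
    using upper Suc.prems unfolding t_def by simp
  with jt have "t \<in> range e"
    using window by (metis rangeI)
  then obtain r' where r': "e r' = t"
    by (metis rangeE)
  have "e (Suc s) \<le> t"
    using strict_mono_Suc_le_if_less[OF mono, of s r'] r' jt IH step by simp
  with upper jt show ?case
    by simp
qed

lemma map_upt_shift_eq:
  assumes "\<forall>t<b. u (j + t) = u t"
  shows "map u [j + a..<j + b] = map u [a..<b]"
  using assms by (simp add: list_eq_iff_nth_eq add.assoc)

text \<open>If \<open>u\<^sub>k u\<^sub>0 \<dots> u\<^sub>M\<^sub>-\<^sub>1\<close> occurs at position \<open>k\<close>, recognizability transports the cutting
  positions of the prefix to the occurrence at \<open>k + 1\<close>. The block ending just before it is
  \<open>\<tau>(u\<^sub>q)\<close>, and comparing the following blocks, injectivity of \<open>\<tau>\<close> identifies the letters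
  after \<open>u\<^sub>q\<close> with a prefix of \<open>u\<close>.\<close>

lemma recognizable_window_desubstitution:
  assumes fp: "fixed_point \<tau> u" and ne: "\<forall>b. \<tau> b \<noteq> []" and inj: "inj \<tau>"
    and recL: "\<forall>i j. (\<forall>k<L. u (i + k) = u (j + k)) \<and> i \<in> cut_set \<tau> u \<longrightarrow> j \<in> cut_set \<tau> u"
    and agree: "\<forall>t < cut_pos \<tau> u S + L. u (Suc k + t) = u t"
  shows "\<exists>q. suffix_letter \<tau> (u q) = u k \<and> (\<forall>s<S. u (Suc q + s) = u s)"
proof -
  define e where "e = cut_pos \<tau> u"
  define M where "M = e S + L"
  have mono: "strict_mono e"
    unfolding e_def by (rule strict_mono_cut_pos[OF ne])
  have block: "\<tau> (u s) = map u [e s..<e (Suc s)]" for s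
    unfolding e_def by (rule fixed_point_subst_letter[OF fp ne])
  have agree_below: "\<forall>t<x. u (Suc k + t) = u t" if "x \<le> M" for x
    using agree that unfolding M_def e_def by simp
  have window: "t \<in> range e \<longleftrightarrow> Suc k + t \<in> range e" if "t + L \<le> M" for t
  proof -
    have "\<forall>m<L. u (t + m) = u (Suc k + t + m)"
      using agree_below[OF that] by (simp add: add.assoc)
    moreover from this have "\<forall>m<L. u (Suc k + t + m) = u (t + m)"
      by simp
    ultimately show ?thesis
      using recL unfolding cut_set_eq_range e_def[symmetric] by blast
  qed
  have "Suc k \<in> range e"
    using window[of 0] rangeI[of e 0] unfolding M_def by (simp add: e_def)
  then obtain p where p: "e p = Suc k"
    by (metis rangeE)
  then obtain q where q: "p = Suc q"
    by (cases p) (simp_all add: e_def)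
  have translate: "e (p + s) = Suc k + e s" if "s \<le> S" for s
  proof (rule strict_mono_range_translate[OF mono _ p window])
    show "e 0 = 0" by (simp add: e_def)
    show "e s + L \<le> M"
      unfolding M_def using that mono by (simp add: strict_mono_less_eq)
  qed
  have "e q < e p"
    using mono q by (simp add: strict_mono_less)
  then have "suffix_letter \<tau> (u q) = u k"
    using block[of q] p q by (simp add: suffix_letter_def last_map)
  moreover have "u (p + s) = u s" if "s < S" for s
  proof -
    have "e (Suc s) \<le> e S"
      using that mono by (simp add: strict_mono_less_eq Suc_le_eq)
    then have "e (Suc s) \<le> M"
      unfolding M_def by simp
    then have "\<tau> (u (p + s)) = map u [e s..<e (Suc s)]"
      using block[of "p + s"] translate[of s] translate[of "Suc s"] that
        map_upt_shift_eq[OF agree_below] by simp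
    then show ?thesis
      using block[of s] by (simp add: injD[OF inj])
  qed
  ultimately show ?thesis
    using q by auto
qed

lemma ex_forall_if_forall_ex_antimono:
  fixes P :: "'b::finite \<Rightarrow> nat \<Rightarrow> bool"
  assumes "\<forall>S. \<exists>b. P b S" and antimono: "\<And>b S T. S \<le> T \<Longrightarrow> P b T \<Longrightarrow> P b S"
  shows "\<exists>b. \<forall>S. P b S"
proof (rule ccontr)
  assume "\<nexists>b. \<forall>S. P b S"
  then obtain bad where bad: "\<And>b. \<not> P b (bad b)"
    by metis
  obtain b where "P b (Max (range bad))"
    using assms(1) by blast
  moreover have "bad b \<le> Max (range bad)"
    by simp
  ultimately show False
    using antimono bad by blast
qed

lemma recognizable_suffix_preimage:
  fixes \<tau> :: "'a::finite \<Rightarrow> 'a list"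
  assumes fp: "fixed_point \<tau> u" and ne: "\<forall>b. \<tau> b \<noteq> []" and inj: "inj \<tau>"
    and recog: "unilaterally_recognizable \<tau> u" and "prepend c u \<in> X_tau u"
  shows "\<exists>b. prepend b u \<in> X_tau u \<and> suffix_letter \<tau> b = c"
proof -
  obtain L where recL: "\<forall>i j. (\<forall>k<L. u (i + k) = u (j + k)) \<and> i \<in> cut_set \<tau> u \<longrightarrow> j \<in> cut_set \<tau> u"
    using recog unfolding unilaterally_recognizable_def by blast
  have "\<exists>b. suffix_letter \<tau> b = c \<and> b # map u [0..<S] \<in> seq_factors u" for S
  proof -
    obtain k where "u k = c" and "\<forall>t<cut_pos \<tau> u S + L. u (Suc k + t) = u t"
      using assms(5) unfolding prepend_mem_X_tau_iff Cons_prefix_mem_seq_factors_iff by blast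
    then obtain q where "suffix_letter \<tau> (u q) = c" and "\<forall>s<S. u (Suc q + s) = u s"
      using recognizable_window_desubstitution[OF fp ne inj recL] by blast
    then show ?thesis
      unfolding Cons_prefix_mem_seq_factors_iff by blast
  qed
  then have "\<exists>b. \<forall>S. suffix_letter \<tau> b = c \<and> b # map u [0..<S] \<in> seq_factors u"
    by (intro ex_forall_if_forall_ex_antimono) (blast, blast intro: Cons_prefix_mem_seq_factors_antimono)
  then show ?thesis
    unfolding prepend_mem_X_tau_iff by blast
qed

lemma prepend_mem_X_tau_imp_suffix_cycle:
  fixes \<tau> :: "'a::finite \<Rightarrow> 'a list"
  assumes fp: "fixed_point \<tau> u" and ne: "\<forall>b. \<tau> b \<noteq> []" and inj: "inj \<tau>"
    and recog: "unilaterally_recognizable \<tau> u" and "prepend a u \<in> X_tau u"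
  shows "\<exists>cyc. suffix_cycle \<tau> cyc \<and> hd cyc = a"
proof -
  have "\<forall>c\<in>{c. prepend c u \<in> X_tau u}. \<exists>b\<in>{c. prepend c u \<in> X_tau u}. suffix_letter \<tau> b = c"
    using recognizable_suffix_preimage[OF fp ne inj recog] by blast
  then obtain m where "0 < m" and "(suffix_letter \<tau> ^^ m) a = a"
    using periodic_if_preimages_in_finite[OF finite] assms(5) by blast
  then show ?thesis
    using suffix_cycle_orbit by (intro exI[of _ "map (\<lambda>i. (suffix_letter \<tau> ^^ i) a) [0..<m]"]) (simp add: hd_map)
qed

lemma suffix_cycle_imp_prepend_mem_X_tau:
  assumes fp: "fixed_point \<tau> u" and ne: "\<forall>b. \<tau> b \<noteq> []"
    and prim: "primitive \<tau>" and aper: "infinite (X_tau u)"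
    and cyc: "suffix_cycle \<tau> cyc" and "a \<in> set cyc" and "c \<in> set cyc"
    and factor: "[c, u 0] \<in> seq_factors u"
  shows "prepend a u \<in> X_tau u"
  unfolding prepend_mem_X_tau_iff
proof
  fix N
  obtain n where "N \<le> n" and last_a: "(suffix_letter \<tau> ^^ n) c = a"
    using suffix_cycle_reaches[OF cyc assms(6,7)] by blast
  let ?x = "(subst_word \<tau> ^^ n) [c]" and ?l = "(cut_pos \<tau> u ^^ n) 1"
  have "(subst_word \<tau> ^^ n) ([c] @ [u 0]) \<in> seq_factors u"
    using funpow_subst_word_mem_seq_factors[OF fp ne] factor by simp
  then have "?x @ map u [0..<?l] \<in> seq_factors u"
    unfolding funpow_subst_word_append funpow_subst_word_first_letter[OF fp ne] .
  moreover have "?x \<noteq> []"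
    using length_funpow_subst_word_ge[OF ne, of "[c]" n] by auto
  then have "?x = butlast ?x @ [a]"
    using last_funpow_subst_word[OF ne, of n c] last_a
    by (metis append_butlast_last_id)
  moreover have "N \<le> ?l"
    using \<open>N \<le> n\<close> length_funpow_subst_word_first_letter[OF fp ne prim aper, of n]
    unfolding funpow_subst_word_first_letter[OF fp ne] by simp
  then have "map u [0..<?l] = map u [0..<N] @ map u [N..<?l]"
    using upt_add_eq_append[of 0 N "?l - N"] by simp
  ultimately have "(butlast ?x @ [a]) @ (map u [0..<N] @ map u [N..<?l]) \<in> seq_factors u"
    by metis
  then show "a # map u [0..<N] \<in> seq_factors u"
    using seq_factors_sublist sublist_appendI[of "a # map u [0..<N]" "butlast ?x" "map u [N..<?l]"]
    by simp
qed

theorem proposition4: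
  fixes \<tau> :: "'a::finite \<Rightarrow> 'a list" and u :: "nat \<Rightarrow> 'a" and a :: 'a
  assumes nonempty: "\<forall>b. \<tau> b \<noteq> []"
    and prim: "primitive \<tau>"
    and gen: "generating_fixed_point \<tau> u"
    and aper: "infinite (X_tau u)"
    and recog: "unilaterally_recognizable \<tau> u"
    and inj_pow: "\<forall>n\<ge>1. inj (subst_pow \<tau> n)"
  shows "prepend a u \<in> X_tau u \<longleftrightarrow>
           (\<exists>cyc. suffix_cycle \<tau> cyc \<and> a \<in> set cyc \<and>
                  (\<exists>i<length cyc. [cyc ! i, u 0] \<in> lang \<tau>))"
proof -
  have fp: "fixed_point \<tau> u" and lang: "lang \<tau> = seq_factors u"
    using gen unfolding generating_fixed_point_def by simp_all
  have "subst_pow \<tau> 1 = \<tau>"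
    by (simp add: subst_pow_def fun_eq_iff)
  then have inj: "inj \<tau>"
    using inj_pow by force
  show ?thesis
  proof
    assume aX: "prepend a u \<in> X_tau u"
    then obtain cyc where cyc: "suffix_cycle \<tau> cyc" and "hd cyc = a"
      using prepend_mem_X_tau_imp_suffix_cycle[OF fp nonempty inj recog] by blast
    moreover have "cyc \<noteq> []"
      using cyc unfolding suffix_cycle_def by simp
    moreover have "a # map u [0..<1] \<in> seq_factors u"
      using aX unfolding prepend_mem_X_tau_iff by blast
    ultimately show "\<exists>cyc. suffix_cycle \<tau> cyc \<and> a \<in> set cyc \<and> (\<exists>i<length cyc. [cyc ! i, u 0] \<in> lang \<tau>)"
      unfolding lang by (intro exI[of _ cyc]) (auto simp: hd_conv_nth)
  next
    assume "\<exists>cyc. suffix_cycle \<tau> cyc \<and> a \<in> set cyc \<and> (\<exists>i<length cyc. [cyc ! i, u 0] \<in> lang \<tau>)"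
    then obtain cyc i where "suffix_cycle \<tau> cyc" "a \<in> set cyc" "i < length cyc" "[cyc ! i, u 0] \<in> seq_factors u"
      unfolding lang by blast
    then show "prepend a u \<in> X_tau u"
      using suffix_cycle_imp_prepend_mem_X_tau[OF fp nonempty prim aper] nth_mem by blast
  qed
qed

end
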